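(* The abelian groups in $\mathcal{D}_1$ are exactly the cyclic groups of order $p^2$ with $p$ prime. The nonabelian groups in $\mathcal{D}_1$ are exactly the Frobenius groups of order $pq$ with $p,q$ primes.
   Context: All groups are finite. $\mathcal{D}(G)$ denotes the number of conjugacy classes of nontrivial subgroups $H$ of $G$ with $N_G(H)\neq H$; $\mathcal{D}_n$ is the family of finite groups $G$ with $\mathcal{D}(G)=n$. *)

theory Defs
  imports "HOL-Algebra.Algebra" "HOL-Computational_Algebra.Primes"
begin

definition subgroup_conj_class :: "('a, 'b) monoid_scheme \<Rightarrow> 'a set \<Rightarrow> 'a set set" where
  "subgroup_conj_class G H = {g <#\<^bsub>G\<^esub> H #>\<^bsub>G\<^esub> inv\<^bsub>G\<^esub> g | g. g \<in> carrier G}"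

definition D_count :: "('a, 'b) monoid_scheme \<Rightarrow> nat" where
  "D_count G = card (subgroup_conj_class G `
      {H. subgroup H G \<and> H \<noteq> {\<one>\<^bsub>G\<^esub>} \<and> normalizer G H \<noteq> H})"

definition frobenius_group :: "('a, 'b) monoid_scheme \<Rightarrow> bool" where
  "frobenius_group G \<longleftrightarrow> (\<exists>H. subgroup H G \<and> H \<noteq> {\<one>\<^bsub>G\<^esub>} \<and> H \<noteq> carrier G \<and>
      (\<forall>g \<in> carrier G - H. H \<inter> (g <#\<^bsub>G\<^esub> H #>\<^bsub>G\<^esub> inv\<^bsub>G\<^esub> g) = {\<one>\<^bsub>G\<^esub>}))"

end

theory Submission
  imports Defs
begin

text \<open>
  Call a nontrivial subgroup bad (\<open>non_self_normalizing\<close>) if it is not self-normalizing, so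
  that \<open>\<D>(G)\<close> counts conjugacy classes of bad subgroups. In a \<open>p\<close>-group every proper
  subgroup is properly contained in its normalizer, so chains inside Sylow subgroups produce bad
  subgroups; when \<open>\<D>(G) = 1\<close> they all have one order \<open>m\<close>, whence \<open>p\<^sup>3\<close> never divides
  \<open>|G|\<close> and \<open>p\<^sup>2\<close> divides \<open>|G|\<close> only for \<open>p = m\<close>. On the other side, a self-normalizing
  subgroup of prime order \<open>s\<close> has \<open>|G|/s\<close> conjugates meeting pairwise trivially; they cover
  \<open>|G|(s - 1)/s\<close> nonidentity elements, so two such subgroups of distinct prime orders cannot
  coexist, and a subgroup of order \<open>|G|/s\<close> must consist of the remaining elements, hence is
  normal. For abelian \<open>G\<close> every subgroup is normal, so \<open>\<D>(G) = 1\<close> means a unique nontrivial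
  proper subgroup, i.e. \<open>G\<close> cyclic of order \<open>p\<^sup>2\<close>. For nonabelian \<open>G\<close> the counting leaves
  \<open>|G| \<in> {m s, m\<^sup>2 s}\<close>; in the second case the normal subgroup of order \<open>m\<^sup>2\<close> would be bad,
  so \<open>|G| = m s\<close> and the self-normalizing subgroup of order \<open>s\<close> is a Frobenius complement.
\<close>

\<comment> \<open>Make \<open>prime\<close> refer to primality of natural numbers rather than to HOL-Algebra's notion.\<close>
hide_const (open) Divisibility.prime

lemma divisors_of_prime_product:
  fixes p q d :: nat
  assumes "prime p" "prime q" "d dvd p * q"
  shows "d = 1 \<or> d = p \<or> d = q \<or> d = p * q"
proof (cases "p dvd d")
  case True
  then obtain e where e: "d = p * e"
    by (auto elim: dvdE)
  then have "e dvd q"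
    using assms(1,3) prime_gt_0_nat by auto
  then show ?thesis
    using assms(2) e by (auto simp: prime_nat_iff)
next
  case False
  then have "d dvd q"
    using assms(1,3) prime_imp_coprime coprime_commute coprime_dvd_mult_right_iff by metis
  then show ?thesis
    using assms(2) by (auto simp: prime_nat_iff)
qed

lemma eq_1_or_prime_if_unique_prime_divisor:
  fixes u :: nat
  assumes "u > 0"
    and unique: "\<And>p q. prime p \<Longrightarrow> prime q \<Longrightarrow> p dvd u \<Longrightarrow> q dvd u \<Longrightarrow> p = q"
    and squarefree: "\<And>p. prime p \<Longrightarrow> \<not> p ^ 2 dvd u"
  shows "u = 1 \<or> prime u"
proof (rule disjCI)
  assume "\<not> prime u"
  show "u = 1"
  proof (rule ccontr)
    assume "u \<noteq> 1"
    then obtain s where s: "prime s" "s dvd u"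
      using prime_factor_nat by blast
    then obtain v where v: "u = s * v"
      by (auto elim: dvdE)
    have "v \<noteq> 1"
      using v s(1) \<open>\<not> prime u\<close> by auto
    then obtain t where t: "prime t" "t dvd v"
      using prime_factor_nat by blast
    then have "t = s"
      using unique[OF t(1) s(1)] v by simp
    then have "s ^ 2 dvd u"
      using t(2) v by (simp add: power2_eq_square)
    then show False
      using squarefree[OF s(1)] by blast
  qed
qed

lemma prime_dvd_if_square_or_two_prime_divisors:
  fixes n m :: nat
  assumes "n > 1" "\<not> prime n"
    and square: "\<And>p. prime p \<Longrightarrow> p ^ 2 dvd n \<Longrightarrow> p = m"
    and two: "\<And>p q. prime p \<Longrightarrow> prime q \<Longrightarrow> p dvd n \<Longrightarrow> q dvd n \<Longrightarrow> p \<noteq> m \<Longrightarrow> q \<noteq> m \<Longrightarrow> p = q"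
  shows "prime m" "m dvd n"
proof -
  obtain p where p: "prime p" "p dvd n"
    using prime_factor_nat[of n] assms(1) by auto
  then obtain r where r: "n = p * r"
    by (auto elim: dvdE)
  then have "r \<noteq> 1"
    using p(1) assms(2) by auto
  then obtain q where q: "prime q" "q dvd r"
    using prime_factor_nat by blast
  have "q dvd n"
    using q(2) r by simp
  have "p = m \<or> q = m"
  proof (cases "q = p")
    case True
    then have "p ^ 2 dvd n"
      using q(2) r by (simp add: power2_eq_square)
    then show ?thesis
      using square[OF p(1)] by simp
  next
    case False
    then show ?thesis
      using two[OF p(1) q(1) p(2) \<open>q dvd n\<close>] by blast
  qed
  then show "prime m" "m dvd n"
    using p q \<open>q dvd n\<close> by auto
qed

lemma prime_factorization_shape:
  fixes n m :: nat
  assumes "n > 1" "\<not> prime n"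
    and square: "\<And>p. prime p \<Longrightarrow> p ^ 2 dvd n \<Longrightarrow> p = m"
    and cube: "\<And>p. prime p \<Longrightarrow> \<not> p ^ 3 dvd n"
    and two: "\<And>p q. prime p \<Longrightarrow> prime q \<Longrightarrow> p dvd n \<Longrightarrow> q dvd n \<Longrightarrow> p \<noteq> m \<Longrightarrow> q \<noteq> m \<Longrightarrow> p = q"
  shows "prime m \<and> (n = m ^ 2 \<or> (\<exists>s. prime s \<and> s \<noteq> m \<and> (n = m * s \<or> n = m ^ 2 * s)))"
proof -
  have m: "prime m" "m dvd n"
    using prime_dvd_if_square_or_two_prime_divisors[OF assms(1,2) square two] by blast+
  have "n \<noteq> 0" "\<not> is_unit m"
    using assms(1) m(1) by auto
  define k where "k = multiplicity m n"
  obtain u where u: "n = m ^ k * u" "\<not> m dvd u"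
    using multiplicity_decompose'[OF \<open>n \<noteq> 0\<close> \<open>\<not> is_unit m\<close>] unfolding k_def by blast
  have "k \<ge> 1" "k \<le> 2"
    using power_dvd_iff_le_multiplicity[where x = n and p = m and n = 1]
      power_dvd_iff_le_multiplicity[where x = n and p = m and n = 3]
      \<open>n \<noteq> 0\<close> \<open>\<not> is_unit m\<close> m(2) cube[OF m(1)]
    unfolding k_def by auto
  then have k: "k = 1 \<or> k = 2"
    by linarith
  have u_dvd: "u dvd n"
    using u(1) dvd_triv_right[of u "m ^ k"] by simp
  have "u = 1 \<or> prime u"
  proof (rule eq_1_or_prime_if_unique_prime_divisor)
    show "u > 0"
      using u(1) assms(1) by (cases "u = 0") auto
    show "p = q" if "prime p" "prime q" "p dvd u" "q dvd u" for p q
      using two[OF that(1,2) dvd_trans[OF that(3) u_dvd] dvd_trans[OF that(4) u_dvd]] that(3,4) u(2)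
      by blast
    show "\<not> p ^ 2 dvd u" if "prime p" for p
    proof
      assume "p ^ 2 dvd u"
      then have "p = m"
        using square[OF that] u_dvd by (auto intro: dvd_trans)
      then show False
        using \<open>p ^ 2 dvd u\<close> u(2) by (auto intro: dvd_trans simp: power2_eq_square)
    qed
  qed
  then show ?thesis
  proof
    assume "u = 1"
    then have "n = m ^ k"
      using u(1) by simp
    then show ?thesis
      using k m(1) assms(2) by auto
  next
    assume "prime u"
    moreover have "u \<noteq> m"
      using u(2) by auto
    ultimately show ?thesis
      using k m(1) u(1) by auto
  qed
qed

lemma Un_eq_if_card_eq:
  assumes "finite U" "A \<subseteq> U" "B \<subseteq> U" "A \<inter> B = {}" "card A + card B = card U"
  shows "A \<union> B = U"
proof -
  have "finite A" "finite B"
    using assms(1-3) finite_subset by blast+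
  then have "card (A \<union> B) = card U"
    using card_Un_disjoint[of A B] assms(4,5) by simp
  then show ?thesis
    using card_subset_eq[OF assms(1)] assms(2,3) by simp
qed

definition non_self_normalizing :: "('a, 'b) monoid_scheme \<Rightarrow> 'a set \<Rightarrow> bool" where
  "non_self_normalizing G H \<longleftrightarrow> subgroup H G \<and> H \<noteq> {\<one>\<^bsub>G\<^esub>} \<and> normalizer G H \<noteq> H"

lemma D_count_eq_card_classes:
  "D_count G = card (subgroup_conj_class G ` {H. non_self_normalizing G H})"
  unfolding D_count_def non_self_normalizing_def by simp

locale finite_group = group +
  assumes finite_carrier: "finite (carrier G)"

context group begin

lemma subgroup_conjugate:
  assumes "g \<in> carrier G" "subgroup H G"
  shows "subgroup (g <# H #> inv g) G"
  using subgroup_conjugation_is_surj1[of "inv g" H] assms by simp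

lemma conjugate_eq_image:
  assumes "g \<in> carrier G" "H \<subseteq> carrier G"
  shows "g <# H #> inv g = (\<lambda>h. g \<otimes> h \<otimes> inv g) ` H"
  unfolding l_coset_def r_coset_def using assms by auto

lemma card_conjugate:
  assumes "g \<in> carrier G" "H \<subseteq> carrier G"
  shows "card (g <# H #> inv g) = card H"
proof -
  have "inj_on (\<lambda>h. g \<otimes> h \<otimes> inv g) H"
    by (rule inj_onI) (use assms in \<open>auto dest: conjugation_is_inj\<close>)
  then show ?thesis
    using conjugate_eq_image[OF assms] by (simp add: card_image)
qed

lemma normalizer_conv:
  assumes "H \<subseteq> carrier G"
  shows "normalizer G H = {g \<in> carrier G. g <# H #> inv g = H}"
  using assms unfolding normalizer_def stabilizer_def by auto

lemma subgroup_subset_normalizer: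
  assumes "subgroup H G"
  shows "H \<subseteq> normalizer G H"
  using subgroup.subset[OF normal_imp_subgroup[OF subgroup_in_normalizer[OF assms]]] by simp

lemma normal_conjugate_eq:
  assumes "H \<lhd> G" "g \<in> carrier G"
  shows "g <# H #> inv g = H"
proof -
  have HG: "H \<subseteq> carrier G"
    using assms(1) normal_imp_subgroup subgroup.subset by blast
  have "g <# H = H #> g"
    using assms by (simp add: normal.coset_eq)
  then have "g <# H #> inv g = H #> (g \<otimes> inv g)"
    using assms HG by (simp add: coset_mult_assoc)
  then show ?thesis
    using assms HG by (simp add: coset_mult_one)
qed

lemma normalizer_of_normal:
  assumes "H \<lhd> G"
  shows "normalizer G H = carrier G"
  using normalizer_conv[of H] normal_conjugate_eq[OF assms] assms
  by (auto simp: normal_imp_subgroup subgroup.subset)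

lemma normalizer_carrier: "normalizer G (carrier G) = carrier G"
  using normalizer_conv[of "carrier G"] subgroup_subset_normalizer[OF subgroup_self] by auto

lemma self_mem_subgroup_conj_class:
  assumes "H \<subseteq> carrier G"
  shows "H \<in> subgroup_conj_class G H"
  unfolding subgroup_conj_class_def
  using assms by (auto simp: lcos_mult_one coset_mult_one intro!: exI[of _ "\<one>"])

lemma subgroup_conj_class_memD:
  assumes "c \<in> subgroup_conj_class G H" "subgroup H G"
  shows "subgroup c G" "card c = card H"
proof -
  obtain g where "g \<in> carrier G" "c = g <# H #> inv g"
    using assms(1) unfolding subgroup_conj_class_def by blast
  then show "subgroup c G" "card c = card H"
    using subgroup_conjugate[OF _ assms(2)] card_conjugate[OF _ subgroup.subset[OF assms(2)]] by simp_all
qed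

lemma card_subgroup_conj_class:
  assumes "H \<subseteq> carrier G"
  shows "card (subgroup_conj_class G H) * card (normalizer G H) = order G"
proof -
  let ?conj = "\<lambda>g. \<lambda>H \<in> {H. H \<subseteq> carrier G}. g <# H #> inv g"
  interpret conj: group_action G "{H. H \<subseteq> carrier G}" ?conj
    by (rule action_by_conjugation_on_power_set)
  have "orbit G ?conj H = subgroup_conj_class G H"
    unfolding orbit_def subgroup_conj_class_def using assms by auto
  then show ?thesis
    using conj.orbit_stabilizer_theorem[of H] assms unfolding normalizer_def by auto
qed

lemma conj_class_member_normal_imp_eq:
  assumes "H \<subseteq> carrier G" "c \<in> subgroup_conj_class G H" "normalizer G c = carrier G"
  shows "c = H"
proof -
  obtain g where g: "g \<in> carrier G" "c = g <# H #> inv g"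
    using assms(2) unfolding subgroup_conj_class_def by blast
  have "c \<subseteq> carrier G"
    using g l_coset_subset_G r_coset_subset_G assms(1) by simp
  moreover have "inv g \<in> normalizer G c"
    using assms(3) g(1) by simp
  ultimately have "inv g <# c #> inv (inv g) = c"
    using normalizer_conv by blast
  moreover have "inv g <# c #> g = H"
    using subgroup_conjugation_is_surj0[of "inv g" H] g assms(1) by simp
  ultimately show ?thesis
    using g(1) by simp
qed

lemma card_subgroup_dvd_card:
  assumes "subgroup A G" "subgroup B G" "A \<subseteq> B" "finite B"
  shows "card A dvd card B"
proof -
  interpret B: group "G\<lparr>carrier := B\<rparr>"
    using assms subgroup_imp_group by blast
  have "card (rcosets\<^bsub>G\<lparr>carrier := B\<rparr>\<^esub> A) * card A = card B"
    using B.lagrange subgroup_incl assms unfolding order_def by fastforce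
  then show ?thesis
    by (metis dvd_triv_right)
qed

lemma subgroup_card_eq_1_iff:
  assumes "subgroup H G"
  shows "card H = 1 \<longleftrightarrow> H = {\<one>}"
  using subgroup.one_closed[OF assms] by (auto simp: card_1_singleton_iff)

lemma subgroup_prime_card_nontrivial:
  assumes "subgroup H G" "prime (card H)"
  shows "H \<noteq> {\<one>}"
  using assms by auto

lemma subgroup_of_prime_card_subgroup:
  assumes "subgroup A G" "subgroup B G" "A \<subseteq> B" "prime (card B)"
  shows "A = {\<one>} \<or> A = B"
proof -
  have fin: "finite B"
    using assms(4) by (metis card.infinite not_prime_0)
  have "card A = 1 \<or> card A = card B"
    using card_subgroup_dvd_card[OF assms(1-3) fin] assms(4) by (simp add: prime_nat_iff)
  then show ?thesis
    using subgroup_card_eq_1_iff[OF assms(1)] card_subset_eq[OF fin assms(3)] by blast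
qed

lemma prime_card_subgroups_Int:
  assumes "subgroup A G" "subgroup B G" "prime (card A)" "prime (card B)" "A \<noteq> B"
  shows "A \<inter> B = {\<one>}"
proof -
  have "A \<inter> B = {\<one>} \<or> A \<inter> B = A" "A \<inter> B = {\<one>} \<or> A \<inter> B = B"
    using subgroup_of_prime_card_subgroup[OF subgroups_Inter_pair[OF assms(1,2)]] assms by auto
  then show ?thesis
    using assms(5) by blast
qed

lemma Union_prime_subgroups_disjoint:
  assumes "\<And>c. c \<in> C \<Longrightarrow> subgroup c G \<and> card c = p"
    and "\<And>d. d \<in> D \<Longrightarrow> subgroup d G \<and> card d = q"
    and "prime p" "prime q" "p \<noteq> q"
  shows "(\<Union>C - {\<one>}) \<inter> (\<Union>D - {\<one>}) = {}"
proof -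
  have "c \<inter> d = {\<one>}" if "c \<in> C" "d \<in> D" for c d
    using prime_card_subgroups_Int assms that by metis
  then show ?thesis
    by blast
qed

lemma generate_singleton_eq_carrier_imp_cyclic:
  assumes "y \<in> carrier G" "generate G {y} = carrier G"
  shows "cyclic_group G"
proof -
  have "subgroup_generated G {y} = G"
    unfolding subgroup_generated_def using assms by simp
  then show ?thesis
    unfolding cyclic_group_def using assms(1) by blast
qed

lemma non_self_normalizing_imp_proper:
  "non_self_normalizing G H \<Longrightarrow> H \<noteq> carrier G"
  using normalizer_carrier unfolding non_self_normalizing_def by auto

lemma comm_group_non_self_normalizing_iff:
  assumes "comm_group G"
  shows "non_self_normalizing G H \<longleftrightarrow> subgroup H G \<and> H \<noteq> {\<one>} \<and> H \<noteq> carrier G"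
  using normalizer_of_normal comm_group.subgroup_imp_normal[OF assms]
  unfolding non_self_normalizing_def by auto

lemma D_count_eq_1_imp_conj:
  assumes "D_count G = 1" "non_self_normalizing G H" "non_self_normalizing G K"
  shows "K \<in> subgroup_conj_class G H"
proof -
  obtain C where C: "subgroup_conj_class G ` {H. non_self_normalizing G H} = {C}"
    using assms(1) by (auto simp: D_count_eq_card_classes card_1_singleton_iff)
  then have "subgroup_conj_class G K = subgroup_conj_class G H"
    using assms(2,3) by blast
  then show ?thesis
    using self_mem_subgroup_conj_class assms(3) subgroup.subset
    unfolding non_self_normalizing_def by blast
qed

lemma D_count_eq_1_imp_card_eq:
  assumes "D_count G = 1" "non_self_normalizing G H" "non_self_normalizing G K"
  shows "card K = card H"
  using subgroup_conj_class_memD(2)[OF D_count_eq_1_imp_conj[OF assms]] assms(2)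
  unfolding non_self_normalizing_def by blast

lemma D_count_eq_1_imp_ex:
  assumes "D_count G = 1"
  shows "\<exists>H. non_self_normalizing G H"
proof (rule ccontr)
  assume "\<nexists>H. non_self_normalizing G H"
  then have "{H. non_self_normalizing G H} = {}"
    by blast
  then show False
    using assms by (simp add: D_count_eq_card_classes)
qed

lemma D_count_eq_1I:
  assumes "\<And>H. non_self_normalizing G H \<longleftrightarrow> H = S"
  shows "D_count G = 1"
proof -
  have "{H. non_self_normalizing G H} = {S}"
    using assms by auto
  then show ?thesis
    by (simp add: D_count_eq_card_classes)
qed

lemma D_count_eq_1_self_normalizing:
  assumes "D_count G = 1" "non_self_normalizing G H"
    and "subgroup K G" "prime (card K)" "card K \<noteq> card H"
  shows "normalizer G K = K"
  using D_count_eq_1_imp_card_eq[OF assms(1,2), of K] assms(3-5) subgroup_prime_card_nontrivial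
  unfolding non_self_normalizing_def by blast

end

context finite_group begin

lemma finite_subgroup:
  "subgroup H G \<Longrightarrow> finite H"
  using finite_carrier subgroup.subset finite_subset by blast

lemma card_subgroup_dvd_order:
  assumes "subgroup H G"
  shows "card H dvd order G"
  using lagrange[OF assms] by (metis dvd_triv_right)

lemma subgroup_card_eq_order:
  assumes "subgroup H G" "card H = order G"
  shows "H = carrier G"
  using card_subset_eq[OF finite_carrier subgroup.subset[OF assms(1)]] assms(2)
  unfolding order_def by simp

lemma exists_subgroup_prime_power_card:
  assumes "prime p" "p ^ k dvd order G"
  shows "\<exists>H. subgroup H G \<and> card H = p ^ k"
  using sylow_thm[of p G k "order G div p ^ k"] assms finite_carrier is_group by auto

lemma exists_subgroup_prime_power_card_in:
  assumes "subgroup K G" "prime p" "p ^ k dvd card K"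
  shows "\<exists>H. subgroup H G \<and> H \<subseteq> K \<and> card H = p ^ k"
proof -
  interpret K: finite_group "G\<lparr>carrier := K\<rparr>"
    using subgroup_imp_group[OF assms(1)] finite_subgroup[OF assms(1)]
    by (simp add: finite_group_def finite_group_axioms_def)
  obtain H where H: "subgroup H (G\<lparr>carrier := K\<rparr>)" "card H = p ^ k"
    using K.exists_subgroup_prime_power_card[of p k] assms by (auto simp: order_def)
  have "H \<subseteq> K"
    using subgroup.subset[OF H(1)] by simp
  then show ?thesis
    using incl_subgroup[OF assms(1) H(1)] H(2) by blast
qed

lemma prime_order_imp_cyclic:
  assumes "prime (order G)"
  shows "cyclic_group G"
proof -
  have "\<not> carrier G \<subseteq> {\<one>}"
  proof
    assume "carrier G \<subseteq> {\<one>}"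
    then have "order G \<le> 1"
      unfolding order_def using card_mono[of "{\<one>}" "carrier G"] by simp
    then show False
      using prime_ge_2_nat[OF assms] by linarith
  qed
  then obtain y where y: "y \<in> carrier G" "y \<noteq> \<one>" by blast
  have sub: "subgroup (generate G {y}) G"
    using generate_is_subgroup y by simp
  have "generate G {y} \<noteq> {\<one>}"
    using y generate.incl[of y "{y}" G] by auto
  moreover have "card (generate G {y}) = 1 \<or> card (generate G {y}) = order G"
    using card_subgroup_dvd_order[OF sub] assms by (simp add: prime_nat_iff)
  ultimately have "generate G {y} = carrier G"
    using subgroup_card_eq_1_iff[OF sub] subgroup_card_eq_order[OF sub] by blast
  then show ?thesis
    using generate_singleton_eq_carrier_imp_cyclic y by blast
qed

end

section \<open>Normalizers grow in p-groups\<close>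

lemma (in group_action) prime_dvd_card_orbit:
  assumes "order G = p ^ a" "prime p" "x \<in> E" "\<exists>g \<in> carrier G. \<phi> g x \<noteq> x"
  shows "p dvd card (orbit G \<phi> x)"
proof -
  have "card (orbit G \<phi> x) dvd p ^ a"
    using orbit_stabilizer_theorem[OF assms(3)] assms(1) by (metis dvd_triv_left)
  then obtain i where i: "card (orbit G \<phi> x) = p ^ i"
    using divides_primepow_nat[OF assms(2)] by blast
  have "orbit G \<phi> x \<noteq> {x}"
    using assms(4) unfolding orbit_def by blast
  then have "card (orbit G \<phi> x) \<noteq> 1"
    using orbit_refl[OF assms(3)] by (metis card_1_singletonE singletonD)
  then show ?thesis
    using i by (cases i) auto
qed

lemma (in group_action) prime_dvd_card_fixed_points:
  assumes "order G = p ^ a" "prime p" "finite S" "S \<subseteq> E"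
    and invariant: "\<And>g x. g \<in> carrier G \<Longrightarrow> x \<in> S \<Longrightarrow> \<phi> g x \<in> S"
    and "p dvd card S"
  shows "p dvd card {x \<in> S. \<forall>g \<in> carrier G. \<phi> g x = x}"
proof -
  define N where "N = {x \<in> S. \<exists>g \<in> carrier G. \<phi> g x \<noteq> x}"
  have orbit_subset_N: "orbit G \<phi> x \<subseteq> N" if x: "x \<in> N" for x
  proof
    fix y assume y: "y \<in> orbit G \<phi> x"
    have xE: "x \<in> E" and yS: "y \<in> S"
      using x y invariant assms(4) unfolding N_def orbit_def by blast+
    show "y \<in> N"
    proof (rule ccontr)
      assume "y \<notin> N"
      then have "orbit G \<phi> y = {y}"
        using yS orbit_refl[of y] assms(4) unfolding N_def orbit_def by auto
      moreover have "x \<in> orbit G \<phi> y"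
        using orbit_sym[OF xE _ y] yS assms(4) by blast
      ultimately show False
        using x \<open>y \<notin> N\<close> by simp
    qed
  qed
  have "N = \<Union> ((\<lambda>x. orbit G \<phi> x) ` N)"
    using orbit_subset_N orbit_refl assms(4) unfolding N_def by blast
  moreover have "pairwise disjnt ((\<lambda>x. orbit G \<phi> x) ` N)"
    using disjoint_union assms(4) unfolding pairwise_def disjnt_def orbits_def N_def by blast
  moreover have "finite N"
    using assms(3) unfolding N_def by simp
  ultimately have "card N = sum card ((\<lambda>x. orbit G \<phi> x) ` N)"
    using card_Union_disjoint orbit_subset_N finite_subset
    by (metis (no_types, lifting) imageE)
  also have "p dvd \<dots>"
    using prime_dvd_card_orbit[OF assms(1,2)] assms(4) unfolding N_def by (auto intro: dvd_sum)
  finally have "p dvd card S - card N"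
    using assms(6) by (simp add: dvd_diff_nat)
  moreover have "{x \<in> S. \<forall>g \<in> carrier G. \<phi> g x = x} = S - N" "N \<subseteq> S"
    unfolding N_def by auto
  ultimately show ?thesis
    using card_Diff_subset[OF finite_subset[OF _ assms(3)]] by simp
qed

context group begin

lemma left_coset_conjugate:
  assumes "subgroup H G" "h \<in> H" "x \<in> carrier G"
  shows "h <# (x <# H) #> inv h = (h \<otimes> x) <# H"
proof -
  have HG: "H \<subseteq> carrier G" and hG: "h \<in> carrier G"
    using assms subgroup.subset by blast+
  have "(x <# H) #> inv h = x <# (H #> inv h)"
    using coset_assoc[OF assms(3) _ HG] hG by simp
  also have "H #> inv h = H"
    using assms(1,2) by (simp add: subgroup.rcos_const subgroup.m_inv_closed)
  finally have "(x <# H) #> inv h = x <# H" .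
  moreover have "h <# (x <# H) #> inv h = h <# ((x <# H) #> inv h)"
    using coset_assoc[OF hG _ l_coset_subset_G[OF HG assms(3)]] hG by simp
  ultimately show ?thesis
    using lcos_m_assoc[OF HG hG assms(3)] by simp
qed

lemma card_left_cosets_in_subgroup:
  assumes "subgroup H G" "subgroup L G" "H \<subseteq> L" "finite L"
  shows "card ((\<lambda>x. x <# H) ` L) * card H = card L"
proof -
  interpret L: group "G\<lparr>carrier := L\<rparr>"
    using subgroup_imp_group[OF assms(2)] .
  have "lcosets\<^bsub>G\<lparr>carrier := L\<rparr>\<^esub> H = (\<lambda>x. x <# H) ` L"
    unfolding LCOSETS_def by auto
  then show ?thesis
    using L.l_lagrange[OF _ subgroup_incl[OF assms(1-3)]] assms(4) by (simp add: order_def)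
qed

lemma left_coset_fixed_imp_inv_normalizer:
  assumes "subgroup H G" "finite H" "x \<in> carrier G"
    and fixed: "\<And>h. h \<in> H \<Longrightarrow> (h \<otimes> x) <# H = x <# H"
  shows "inv x \<in> normalizer G H"
proof -
  have HG: "H \<subseteq> carrier G"
    using assms(1) subgroup.subset by blast
  have "inv x <# H #> inv (inv x) \<subseteq> H"
  proof
    fix y assume "y \<in> inv x <# H #> inv (inv x)"
    then obtain h where h: "h \<in> H" "y = inv x \<otimes> h \<otimes> x"
      using conjugate_eq_image[OF inv_closed[OF assms(3)] HG] assms(3) by auto
    have hG: "h \<in> carrier G"
      using h HG by blast
    have "h \<otimes> x \<in> x <# H"
      using fixed[OF h(1)] lcos_self[OF m_closed[OF hG assms(3)] assms(1)] by simp
    then obtain k where k: "k \<in> H" "h \<otimes> x = x \<otimes> k"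
      unfolding l_coset_def by blast
    have "y = inv x \<otimes> (h \<otimes> x)"
      using h hG assms(3) by (simp add: m_assoc)
    also have "\<dots> = k"
      using k HG assms(3) by (simp add: subsetD m_assoc[symmetric])
    finally show "y \<in> H"
      using k by simp
  qed
  moreover have "card (inv x <# H #> inv (inv x)) = card H"
    using card_conjugate[OF inv_closed[OF assms(3)] HG] assms(3) by simp
  ultimately show ?thesis
    using card_subset_eq[OF assms(2)] normalizer_conv[OF HG] assms(3) by simp
qed

end

context finite_group begin

lemma prime_dvd_card_left_cosets:
  assumes "subgroup L G" "card L = p ^ a" "prime p" "subgroup H G" "H \<subset> L"
  shows "p dvd card ((\<lambda>x. x <# H) ` L :: 'a set set)"
    \<comment> \<open>the type annotation rules out reading \<open><#\<close> as multiset inclusion\<close>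
proof -
  have "H \<subseteq> L" and finL: "finite L"
    using assms(1,5) finite_subgroup by auto
  have "card H dvd p ^ a"
    using card_subgroup_dvd_card[OF assms(4,1) \<open>H \<subseteq> L\<close> finL] assms(2) by simp
  then obtain c where c: "card H = p ^ c" "c \<le> a"
    using divides_primepow_nat[OF assms(3)] by blast
  moreover have "card H \<noteq> card L"
    using card_subset_eq[OF finL \<open>H \<subseteq> L\<close>] assms(5) by blast
  ultimately have "c \<noteq> a"
    using assms(2) by auto
  with c(2) have "c < a"
    by simp
  have "card ((\<lambda>x. x <# H) ` L) * p ^ c = p ^ (a - c) * p ^ c"
    using card_left_cosets_in_subgroup[OF assms(4,1) \<open>H \<subseteq> L\<close> finL] assms(2) c(1) \<open>c < a\<close>
    by (simp add: power_add[symmetric])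
  then have "card ((\<lambda>x. x <# H) ` L) = p ^ (a - c)"
    using prime_gt_0_nat[OF assms(3)] by simp
  then show ?thesis
    using \<open>c < a\<close> by simp
qed

lemma prime_dvd_card_conj_fixed_left_cosets:
  assumes "subgroup L G" "card L = p ^ a" "prime p" "subgroup H G" "H \<subset> L"
  shows "p dvd card {A \<in> (\<lambda>x. x <# H) ` L. \<forall>h \<in> H. h <# A #> inv h = A}"
proof -
  let ?conj = "\<lambda>g. \<lambda>A \<in> {A. A \<subseteq> carrier G}. g <# A #> inv g"
  define S where "S = (\<lambda>x. x <# H) ` L"
  interpret H: group_action "G\<lparr>carrier := H\<rparr>" "{A. A \<subseteq> carrier G}" ?conj
    using group_action.induced_action[OF action_by_conjugation_on_power_set assms(4)] .
  have HG: "H \<subseteq> carrier G" and LG: "L \<subseteq> carrier G"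
    using assms(1,4) subgroup.subset by blast+
  have SE: "S \<subseteq> {A. A \<subseteq> carrier G}"
    unfolding S_def using LG HG by (auto dest: l_coset_subset_G)
  obtain c where "card H = p ^ c"
    using card_subgroup_dvd_card[OF assms(4,1)] assms(2,5) finite_subgroup[OF assms(1)]
      divides_primepow_nat[OF assms(3)] by (metis psubset_imp_subset)
  then have order: "order (G\<lparr>carrier := H\<rparr>) = p ^ c"
    by (simp add: order_def)
  have invariant: "?conj h A \<in> S" if h: "h \<in> carrier (G\<lparr>carrier := H\<rparr>)" and A: "A \<in> S" for h A
  proof -
    obtain x where x: "x \<in> L" "A = x <# H"
      using A unfolding S_def by blast
    have "A \<subseteq> carrier G"
      using A SE by blast
    then have "?conj h A = h <# (x <# H) #> inv h"
      using x(2) by simp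
    also have "\<dots> = (h \<otimes> x) <# H"
      using left_coset_conjugate[OF assms(4)] h x(1) LG by auto
    finally show ?thesis
      using h x(1) assms(5) subgroup.m_closed[OF assms(1)] unfolding S_def by auto
  qed
  have "finite S"
    using finite_subgroup[OF assms(1)] unfolding S_def by simp
  then have "p dvd card {A \<in> S. \<forall>h \<in> carrier (G\<lparr>carrier := H\<rparr>). ?conj h A = A}"
    using H.prime_dvd_card_fixed_points[OF order assms(3) _ SE invariant]
      prime_dvd_card_left_cosets[OF assms] unfolding S_def by blast
  moreover have "{A \<in> S. \<forall>h \<in> carrier (G\<lparr>carrier := H\<rparr>). ?conj h A = A} =
      {A \<in> S. \<forall>h \<in> H. h <# A #> inv h = A}"
    using SE by auto
  ultimately show ?thesis
    unfolding S_def by simp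
qed

lemma p_subgroup_normalizer_grows:
  assumes "subgroup L G" "card L = p ^ a" "prime p" "subgroup H G" "H \<subset> L"
  shows "\<exists>x \<in> L - H. x \<in> normalizer G H"
proof -
  \<comment> \<open>The cosets \<open>x <# H\<close> fixed by conjugation with \<open>H\<close> include \<open>H\<close> and are a multiple of \<open>p\<close>
    in number; the representative of any other fixed coset normalizes \<open>H\<close>.\<close>
  define F where "F = {A \<in> (\<lambda>x. x <# H) ` L. \<forall>h \<in> H. h <# A #> inv h = A}"
  have HG: "H \<subseteq> carrier G" and LG: "L \<subseteq> carrier G"
    using assms(1,4) subgroup.subset by blast+
  have conj_coset: "h <# (x <# H) #> inv h = x <# H \<longleftrightarrow> (h \<otimes> x) <# H = x <# H"
    if "h \<in> H" "x \<in> L" for h x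
    using left_coset_conjugate[OF assms(4) that(1)] that(2) LG by auto
  have "H \<in> F"
  proof -
    have "H = \<one> <# H"
      using HG by (simp add: lcos_mult_one)
    then have "H \<in> (\<lambda>x. x <# H) ` L"
      using subgroup.one_closed[OF assms(1)] by blast
    moreover have "h <# H #> inv h = H" if "h \<in> H" for h
      using coset_join3[OF _ assms(4) that] coset_join2[OF _ assms(4)]
        subgroup.m_inv_closed[OF assms(4) that] that HG by auto
    ultimately show ?thesis
      unfolding F_def by simp
  qed
  moreover have "finite F"
    using finite_subgroup[OF assms(1)] unfolding F_def by simp
  ultimately have "card F > 0"
    by (auto simp: card_gt_0_iff)
  moreover have "p dvd card F"
    using prime_dvd_card_conj_fixed_left_cosets[OF assms] unfolding F_def .
  ultimately have "card F \<ge> p"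
    by (simp add: dvd_imp_le)
  then have "\<not> F \<subseteq> {H}"
    using card_mono[of "{H}" F] prime_ge_2_nat[OF assms(3)] by force
  then obtain x where x: "x \<in> L" "x <# H \<in> F" "x <# H \<noteq> H"
    unfolding F_def by blast
  have xG: "x \<in> carrier G"
    using x(1) LG by blast
  have "x \<notin> H"
    using x(3) coset_join3[OF xG assms(4)] by blast
  then have "inv x \<notin> H"
    using subgroup.m_inv_closed[OF assms(4), of "inv x"] xG by auto
  moreover have "inv x \<in> L"
    using x(1) subgroup.m_inv_closed[OF assms(1)] by blast
  moreover have "inv x \<in> normalizer G H"
  proof (rule left_coset_fixed_imp_inv_normalizer[OF assms(4) finite_subgroup[OF assms(4)] xG])
    show "(h \<otimes> x) <# H = x <# H" if "h \<in> H" for h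
      using x(2) conj_coset[OF that x(1)] that unfolding F_def by simp
  qed
  ultimately show ?thesis
    by blast
qed

lemma proper_subgroup_of_p_subgroup_non_self_normalizing:
  assumes "subgroup L G" "card L = p ^ a" "prime p" "subgroup H G" "H \<subset> L" "H \<noteq> {\<one>}"
  shows "non_self_normalizing G H"
  using p_subgroup_normalizer_grows[OF assms(1-5)] assms(4,6)
  unfolding non_self_normalizing_def by blast

end

section \<open>Self-normalizing subgroups of prime order\<close>

context group begin

lemma self_normalizing_prime_subgroup_imp_frobenius:
  assumes "subgroup H G" "prime (card H)" "normalizer G H = H" "H \<noteq> carrier G"
  shows "frobenius_group G"
  unfolding frobenius_group_def
proof (intro exI conjI ballI)
  show "subgroup H G" "H \<noteq> {\<one>}" "H \<noteq> carrier G"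
    using assms subgroup_prime_card_nontrivial by auto
  fix g assume g: "g \<in> carrier G - H"
  have HG: "H \<subseteq> carrier G"
    using assms(1) subgroup.subset by blast
  have "H \<noteq> g <# H #> inv g"
    using g assms(3) normalizer_conv[OF HG] by auto
  moreover have "subgroup (g <# H #> inv g) G" "card (g <# H #> inv g) = card H"
    using subgroup_conjugate[OF _ assms(1)] card_conjugate[OF _ HG] g by auto
  ultimately show "H \<inter> (g <# H #> inv g) = {\<one>}"
    using prime_card_subgroups_Int[OF assms(1)] assms(2) by simp
qed

lemma frobenius_complement_self_normalizing:
  assumes "subgroup H G" "H \<noteq> {\<one>}"
    and "\<forall>g \<in> carrier G - H. H \<inter> (g <# H #> inv g) = {\<one>}"
  shows "normalizer G H = H"
proof -
  have HG: "H \<subseteq> carrier G"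
    using assms(1) subgroup.subset by blast
  have "g \<in> H" if "g \<in> normalizer G H" for g
    using that assms(2,3) normalizer_conv[OF HG] by auto
  then show ?thesis
    using subgroup_subset_normalizer[OF assms(1)] by blast
qed

lemma normal_subgroup_Int_conjugate:
  assumes "subgroup H G" "prime (card H)" "normalizer G H = H" "H \<noteq> carrier G"
    and "subgroup Z G" "prime (card Z)" "normalizer G Z = carrier G"
    and "c \<in> subgroup_conj_class G H"
  shows "Z \<inter> c = {\<one>}"
proof -
  have c: "subgroup c G" "card c = card H"
    using subgroup_conj_class_memD[OF assms(8,1)] by auto
  have "Z \<noteq> c"
    using conj_class_member_normal_imp_eq[OF subgroup.subset[OF assms(1)] assms(8)] assms(3,4,7) by auto
  then show ?thesis
    using prime_card_subgroups_Int[OF assms(5) c(1) assms(6)] c(2) assms(2) by simp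
qed

end

context finite_group begin

lemma card_nontrivial_elements_of_conjugates:
  assumes "subgroup K G" "prime (card K)" "normalizer G K = K"
  shows "card (\<Union>(subgroup_conj_class G K) - {\<one>}) * card K = order G * (card K - 1)"
proof -
  define C where "C = subgroup_conj_class G K"
  have mem: "subgroup c G" "card c = card K" if "c \<in> C" for c
    using subgroup_conj_class_memD[OF _ assms(1)] that unfolding C_def by blast+
  have "card C * card K = order G"
    using card_subgroup_conj_class[OF subgroup.subset[OF assms(1)]] assms(3)
    unfolding C_def by simp
  moreover have "card (\<Union>C - {\<one>}) = card C * (card K - 1)"
  proof -
    have "C \<subseteq> Pow (carrier G)"
      using mem(1) subgroup.subset by blast
    then have "finite C"
      using finite_subset finite_carrier by blast
    moreover have "(c - {\<one>}) \<inter> (d - {\<one>}) = {}" if "c \<in> C" "d \<in> C" "c \<noteq> d" for c d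
      using prime_card_subgroups_Int[OF mem(1)[OF that(1)] mem(1)[OF that(2)]] mem(2) that assms(2)
      by auto
    moreover have "finite (c - {\<one>})" if "c \<in> C" for c
      using finite_subgroup[OF mem(1)[OF that]] by blast
    ultimately have "card (\<Union>c\<in>C. c - {\<one>}) = (\<Sum>c\<in>C. card (c - {\<one>}))"
      by (intro card_UN_disjoint) auto
    also have "\<dots> = (\<Sum>c\<in>C. card K - 1)"
    proof (rule sum.cong[OF refl])
      fix c assume "c \<in> C"
      then show "card (c - {\<one>}) = card K - 1"
        using mem[OF \<open>c \<in> C\<close>] finite_subgroup[of c] subgroup.one_closed[of c G] by simp
    qed
    also have "(\<Union>c\<in>C. c - {\<one>}) = \<Union>C - {\<one>}"
      by blast
    finally show ?thesis
      by simp
  qed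
  ultimately show ?thesis
    unfolding C_def by (simp add: mult.assoc[symmetric] mult.commute)
qed

lemma self_normalizing_prime_subgroups_card_eq:
  assumes "subgroup H G" "prime (card H)" "normalizer G H = H"
    and "subgroup K G" "prime (card K)" "normalizer G K = K"
  shows "card H = card K"
proof (rule ccontr)
  \<comment> \<open>Otherwise the conjugates of \<open>H\<close> and of \<open>K\<close> would cover
    \<open>|G|(1 - 1/p) + |G|(1 - 1/q) \<ge> |G|\<close> nonidentity elements.\<close>
  assume ne: "card H \<noteq> card K"
  define p q where "p = card H" and "q = card K"
  define U V where "U = \<Union>(subgroup_conj_class G H) - {\<one>}"
    and "V = \<Union>(subgroup_conj_class G K) - {\<one>}"
  have p2: "p \<ge> 2" and q2: "q \<ge> 2"
    using assms(2,5) prime_ge_2_nat unfolding p_def q_def by blast+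
  have "U \<inter> V = {}"
    unfolding U_def V_def
    by (rule Union_prime_subgroups_disjoint[OF _ _ assms(2,5) ne])
       (use subgroup_conj_class_memD assms(1,4) in blast)+
  moreover have "U \<subseteq> carrier G - {\<one>}" "V \<subseteq> carrier G - {\<one>}"
    unfolding U_def V_def using subgroup_conj_class_memD(1) assms(1,4) subgroup.subset by blast+
  ultimately have "card U + card V \<le> order G - 1"
    using card_Un_disjoint[of U V] card_mono[of "carrier G - {\<one>}" "U \<union> V"] finite_carrier
    unfolding order_def by (simp add: finite_subset)
  then have "(card U + card V) * (p * q) < order G * (p * q)"
    using finite_carrier order_gt_0_iff_finite p2 q2 by simp
  moreover have "(card U + card V) * (p * q) = order G * ((p - 1) * q + (q - 1) * p)"
  proof -
    have "card U * p = order G * (p - 1)" "card V * q = order G * (q - 1)"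
      using card_nontrivial_elements_of_conjugates assms unfolding U_def V_def p_def q_def by blast+
    moreover have "(card U + card V) * (p * q) = (card U * p) * q + (card V * q) * p"
      by (simp add: algebra_simps)
    ultimately show ?thesis
      by (simp add: algebra_simps)
  qed
  moreover have "p * q \<le> (p - 1) * q + (q - 1) * p"
  proof -
    obtain a b where "p = a + 2" "q = b + 2"
      using p2 q2 by (metis add.commute le_Suc_ex)
    then show ?thesis
      by (simp add: algebra_simps)
  qed
  ultimately show False
    by simp
qed

lemma complement_nontrivial_elements:
  assumes "subgroup H G" "prime (card H)" "normalizer G H = H"
    and "subgroup K G" "card K * card H = order G" "\<not> card H dvd card K"
  shows "K - {\<one>} = carrier G - {\<one>} - \<Union>(subgroup_conj_class G H)"
proof -
  \<comment> \<open>\<open>K\<close> meets every conjugate of \<open>H\<close> trivially, and the element counts add up to \<open>|G| - 1\<close>.\<close>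
  define U where "U = \<Union>(subgroup_conj_class G H) - {\<one>}"
  have "c \<inter> K = {\<one>}" if "c \<in> subgroup_conj_class G H" for c
  proof -
    have c: "subgroup c G" "card c = card H"
      using subgroup_conj_class_memD[OF that assms(1)] by blast+
    have "c \<inter> K \<noteq> c"
      using card_subgroup_dvd_card[OF c(1) assms(4) _ finite_subgroup[OF assms(4)]] c(2) assms(6)
      by (metis Int_lower2)
    then show ?thesis
      using subgroup_of_prime_card_subgroup[OF subgroups_Inter_pair[OF c(1) assms(4)] c(1) Int_lower1]
        c(2) assms(2) by auto
  qed
  then have disjoint: "U \<inter> (K - {\<one>}) = {}"
    unfolding U_def by blast
  have "U \<union> (K - {\<one>}) = carrier G - {\<one>}"
  proof (rule Un_eq_if_card_eq[OF _ _ _ disjoint])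
    show "finite (carrier G - {\<one>})"
      using finite_carrier by simp
    show "U \<subseteq> carrier G - {\<one>}" "K - {\<one>} \<subseteq> carrier G - {\<one>}"
      unfolding U_def using subgroup_conj_class_memD(1)[OF _ assms(1)] subgroup.subset assms(4) by blast+
    have "card U * card H = card K * card H * (card H - 1)"
      using card_nontrivial_elements_of_conjugates[OF assms(1-3)] assms(5) unfolding U_def by simp
    then have "card U = card K * (card H - 1)"
      using prime_gt_0_nat[OF assms(2)] by simp
    moreover have "card (K - {\<one>}) = card K - 1"
      using finite_subgroup[OF assms(4)] subgroup.one_closed[OF assms(4)] by simp
    moreover have "card (carrier G - {\<one>}) = card K * card H - 1"
      using assms(5) finite_carrier unfolding order_def by simp
    moreover have "card K \<ge> 1" "card H \<ge> 1"
      using finite_subgroup[OF assms(4)] subgroup.one_closed[OF assms(4)] prime_gt_0_nat[OF assms(2)]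
      by (auto simp: Suc_le_eq card_gt_0_iff)
    ultimately show "card U + card (K - {\<one>}) = card (carrier G - {\<one>})"
      by (simp add: algebra_simps)
  qed
  then show ?thesis
    using disjoint unfolding U_def by blast
qed

lemma complement_of_self_normalizing_prime_subgroup_normal:
  assumes "subgroup H G" "prime (card H)" "normalizer G H = H"
    and "subgroup K G" "card K * card H = order G" "\<not> card H dvd card K"
  shows "normalizer G K = carrier G"
proof -
  have KG: "K \<subseteq> carrier G"
    using assms(4) subgroup.subset by blast
  have "g <# K #> inv g = K" if g: "g \<in> carrier G" for g
  proof -
    define K' where "K' = g <# K #> inv g"
    have K': "subgroup K' G" "card K' = card K"
      unfolding K'_def using subgroup_conjugate[OF g assms(4)] card_conjugate[OF g KG] by simp_all
    have "K' - {\<one>} = K - {\<one>}"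
      using complement_nontrivial_elements[OF assms] complement_nontrivial_elements[OF assms(1-3) K'(1)]
        K'(2) assms(5,6) by simp
    then show ?thesis
      using subgroup.one_closed[OF assms(4)] subgroup.one_closed[OF K'(1)] unfolding K'_def by blast
  qed
  then show ?thesis
    using normalizer_conv[OF KG] by auto
qed

end

context finite_group begin

lemma card_subgroup_order_prime_square:
  assumes "order G = p ^ 2" "prime p" "subgroup H G"
  shows "H = {\<one>} \<or> card H = p \<or> H = carrier G"
proof -
  have "card H dvd p ^ 2"
    using card_subgroup_dvd_order[OF assms(3)] assms(1) by simp
  then obtain i where i: "i \<le> 2" "card H = p ^ i"
    using divides_primepow_nat[OF assms(2)] by blast
  then consider "i = 0" | "i = 1" | "i = 2"
    by linarith
  then show ?thesis
    using i(2) subgroup_card_eq_1_iff[OF assms(3)] subgroup_card_eq_order[OF assms(3)] assms(1)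
    by cases auto
qed

lemma unique_proper_subgroup_imp_prime_square_order:
  assumes H0: "subgroup H0 G" "H0 \<noteq> {\<one>}" "H0 \<noteq> carrier G"
    and unique: "\<And>H. subgroup H G \<Longrightarrow> H \<noteq> {\<one>} \<Longrightarrow> H \<noteq> carrier G \<Longrightarrow> H = H0"
  shows "\<exists>p. prime p \<and> order G = p ^ 2"
proof -
  have not_prime: "\<not> prime (order G)"
    using subgroup_of_prime_card_subgroup[OF H0(1) subgroup_self subgroup.subset[OF H0(1)]] H0(2,3)
    unfolding order_def by blast
  have prime_divisor: "t = card H0" if t: "prime t" "t dvd order G" for t
  proof -
    obtain T where T: "subgroup T G" "card T = t"
      using exists_subgroup_prime_power_card[of t 1] t by auto
    have "T \<noteq> carrier G"
      using T not_prime t(1) unfolding order_def by auto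
    then show ?thesis
      using unique[OF T(1) subgroup_prime_card_nontrivial] T t(1) by simp
  qed
  have "order G \<noteq> 1"
  proof
    assume "order G = 1"
    then have "carrier G = {\<one>}"
      using subgroup_card_eq_1_iff[OF subgroup_self] unfolding order_def by blast
    then show False
      using H0 subgroup.subset[OF H0(1)] subgroup.one_closed[OF H0(1)] by blast
  qed
  then obtain p where p: "prime p" "p dvd order G"
    using prime_factor_nat by blast
  then obtain r where r: "order G = p * r"
    by (auto elim: dvdE)
  then have "r \<noteq> 1"
    using p(1) not_prime by auto
  then obtain t where t: "prime t" "t dvd r"
    using prime_factor_nat by blast
  have "t dvd order G"
    using t(2) r by simp
  then have "t = p"
    using prime_divisor[OF t(1)] prime_divisor[OF p] by simp
  then have "p ^ 2 dvd order G"
    using t(2) r by (simp add: power2_eq_square)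
  then obtain K where K: "subgroup K G" "card K = p ^ 2"
    using exists_subgroup_prime_power_card[OF p(1)] by blast
  have "1 < p" "p < p ^ 2"
    using prime_gt_1_nat[OF p(1)] by (auto simp: power2_eq_square)
  then have "card K \<noteq> card H0" "card K \<noteq> 1"
    using K(2) prime_divisor[OF p] by auto
  then have "K = carrier G"
    using unique[OF K(1)] subgroup_card_eq_1_iff[OF K(1)] by blast
  then show ?thesis
    using K(2) p(1) unfolding order_def by auto
qed

lemma unique_proper_subgroup_imp_cyclic:
  assumes H0: "subgroup H0 G" "H0 \<noteq> {\<one>}" "H0 \<noteq> carrier G"
    and unique: "\<And>H. subgroup H G \<Longrightarrow> H \<noteq> {\<one>} \<Longrightarrow> H \<noteq> carrier G \<Longrightarrow> H = H0"
  shows "cyclic_group G"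
proof -
  obtain y where y: "y \<in> carrier G" "y \<notin> H0"
    using psubset_imp_ex_mem[of H0 "carrier G"] H0(3) subgroup.subset[OF H0(1)] by blast
  have gen: "subgroup (generate G {y}) G" "y \<in> generate G {y}"
    using generate_is_subgroup[of "{y}"] generate.incl[of y "{y}" G] y(1) by auto
  then have "generate G {y} \<noteq> {\<one>}" "generate G {y} \<noteq> H0"
    using y subgroup.one_closed[OF H0(1)] by auto
  then have "generate G {y} = carrier G"
    using unique[OF gen(1)] by auto
  then show ?thesis
    using generate_singleton_eq_carrier_imp_cyclic[OF y(1)] by simp
qed

lemma pow_eq_one_imp_mem_generate_pow:
  assumes "g \<in> carrier G" "generate G {g} = carrier G" "ord g = p * q" "p > 0"
    and "h \<in> carrier G" "h [^] p = \<one>"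
  shows "h \<in> generate G {g [^] q}"
proof -
  obtain k :: nat where k: "h = g [^] k"
    using assms(1,2,5) generate_pow_on_finite_carrier[OF finite_carrier assms(1)] by blast
  then have "g [^] (k * p) = \<one>"
    using assms(1,6) by (simp add: nat_pow_pow)
  then have "q * p dvd k * p"
    using pow_eq_id[OF assms(1)] assms(3) by (simp add: mult.commute)
  then have "q dvd k"
    using assms(4) dvd_mult_cancel_right[of q p k] by simp
  then obtain j where "k = q * j"
    by (auto elim: dvdE)
  then have "h = (g [^] q) [^] j"
    using k assms(1) by (simp add: nat_pow_pow)
  then show ?thesis
    using generate_pow_on_finite_carrier[OF finite_carrier] assms(1) by auto
qed

lemma cyclic_prime_square_subgroup_eq:
  assumes g: "g \<in> carrier G" "generate G {g} = carrier G"
    and "order G = p ^ 2" "prime p" "subgroup H G" "card H = p"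
  shows "H = generate G {g [^] p}"
proof -
  have p0: "p > 0"
    using prime_gt_0_nat[OF assms(4)] .
  have ord_g: "ord g = p * p"
    using generate_pow_card[OF g(1)] g(2) assms(3) by (simp add: order_def power2_eq_square)
  have gp: "g [^] p \<in> carrier G"
    using g(1) by simp
  have "ord (g [^] p) = p"
    using ord_pow[OF g(1), of p] ord_g p0 by simp
  then have card_gen: "card (generate G {g [^] p}) = p"
    using generate_pow_card[OF gp] by simp
  have "H \<subseteq> generate G {g [^] p}"
  proof
    fix h assume h: "h \<in> H"
    have hG: "h \<in> carrier G"
      using h assms(5) subgroup.subset by blast
    have "generate G {h} \<subseteq> H" "subgroup (generate G {h}) G"
      using generate_subgroup_incl[OF _ assms(5)] generate_is_subgroup h hG by auto
    then have "ord h dvd p"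
      using card_subgroup_dvd_card[OF _ assms(5) _ finite_subgroup[OF assms(5)]]
        generate_pow_card[OF hG] assms(6) by simp
    then show "h \<in> generate G {g [^] p}"
      using pow_eq_one_imp_mem_generate_pow[OF g ord_g p0 hG] pow_eq_id[OF hG] by simp
  qed
  then show ?thesis
    using card_subset_eq[OF finite_subgroup[OF generate_is_subgroup]] card_gen assms(6) gp by simp
qed

lemma prime_square_non_self_normalizing_normal:
  assumes "order G = p ^ 2" "prime p" "non_self_normalizing G H"
  shows "normalizer G H = carrier G"
proof -
  have H: "subgroup H G" "H \<noteq> {\<one>}" "H \<noteq> carrier G" "normalizer G H \<noteq> H"
    using assms(3) non_self_normalizing_imp_proper unfolding non_self_normalizing_def by auto
  have N: "subgroup (normalizer G H) G"
    using normalizer_imp_subgroup[OF subgroup.subset[OF H(1)]] .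
  have HN: "H \<subseteq> normalizer G H"
    using subgroup_subset_normalizer[OF H(1)] .
  then have "normalizer G H \<noteq> {\<one>}"
    using H(2) subgroup.one_closed[OF H(1)] by blast
  moreover have "card H = p"
    using card_subgroup_order_prime_square[OF assms(1,2) H(1)] H(2,3) by blast
  then have "card (normalizer G H) \<noteq> p"
    using card_subset_eq[OF finite_subgroup[OF N] HN] H(4) by auto
  ultimately show ?thesis
    using card_subgroup_order_prime_square[OF assms(1,2) N] by blast
qed

lemma card_proper_subgroup_order_pq:
  assumes "order G = p * q" "prime p" "prime q" "subgroup H G" "H \<noteq> {\<one>}" "H \<noteq> carrier G"
  shows "card H = p \<or> card H = q"
proof -
  have "card H \<noteq> 1" "card H \<noteq> p * q"
    using subgroup_card_eq_1_iff[OF assms(4)] subgroup_card_eq_order[OF assms(4)] assms(1,5,6) by auto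
  then show ?thesis
    using divisors_of_prime_product[OF assms(2,3)] card_subgroup_dvd_order[OF assms(4)] assms(1)
    by auto
qed

lemma normalizer_of_prime_subgroup_order_pq:
  assumes "order G = p * q" "prime p" "prime q" "p \<noteq> q" "subgroup K G" "card K = q"
  shows "normalizer G K = K \<or> normalizer G K = carrier G"
proof -
  have N: "subgroup (normalizer G K) G"
    using normalizer_imp_subgroup subgroup.subset[OF assms(5)] by blast
  have KN: "K \<subseteq> normalizer G K"
    using subgroup_subset_normalizer[OF assms(5)] .
  have "q dvd card (normalizer G K)"
    using card_subgroup_dvd_card[OF assms(5) N KN finite_subgroup[OF N]] assms(6) by simp
  moreover have "\<not> q dvd 1" "\<not> q dvd p"
    using assms(2-4) prime_gt_1_nat primes_dvd_imp_eq by auto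
  ultimately have "card (normalizer G K) = q \<or> card (normalizer G K) = order G"
    using divisors_of_prime_product[OF assms(2,3) card_subgroup_dvd_order[OF N, unfolded assms(1)]]
      assms(1) by auto
  then show ?thesis
    using card_subset_eq[OF finite_subgroup[OF N] KN] assms(6) subgroup_card_eq_order[OF N] by auto
qed

end

section \<open>The abelian case\<close>

context finite_group begin

lemma cyclic_prime_square_D_count_eq_1:
  assumes "cyclic_group G" "prime p" "order G = p ^ 2"
  shows "D_count G = 1"
proof -
  obtain g where g: "g \<in> carrier G" "subgroup_generated G {g} = G"
    using assms(1) unfolding cyclic_group_def by blast
  have gen: "generate G {g} = carrier G"
    using carrier_subgroup_generated[of G "{g}"] g by (simp add: Int_absorb1)
  have comm: "comm_group G"
    using cyclic_imp_abelian_group[OF assms(1)] .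
  obtain S where S: "subgroup S G" "card S = p"
    using exists_subgroup_prime_power_card[OF assms(2), of 1] assms(3) by auto
  show ?thesis
  proof (rule D_count_eq_1I)
    fix H
    show "non_self_normalizing G H \<longleftrightarrow> H = S"
    proof
      assume "non_self_normalizing G H"
      then have H: "subgroup H G" "H \<noteq> {\<one>}" "H \<noteq> carrier G"
        using comm_group_non_self_normalizing_iff[OF comm] by auto
      then have "card H = p"
        using card_subgroup_order_prime_square[OF assms(3,2) H(1)] by blast
      then show "H = S"
        using cyclic_prime_square_subgroup_eq[OF g(1) gen assms(3,2) H(1)]
          cyclic_prime_square_subgroup_eq[OF g(1) gen assms(3,2) S] by simp
    next
      assume "H = S"
      have "p < p ^ 2"
        using prime_gt_1_nat[OF assms(2)] by (simp add: power2_eq_square)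
      then have "S \<noteq> carrier G"
        using S(2) assms(3) unfolding order_def by auto
      moreover have "S \<noteq> {\<one>}"
        using subgroup_prime_card_nontrivial[OF S(1)] S(2) assms(2) by simp
      ultimately show "non_self_normalizing G H"
        using comm_group_non_self_normalizing_iff[OF comm] S(1) \<open>H = S\<close> by simp
    qed
  qed
qed

lemma comm_D_count_eq_1_imp_cyclic_prime_square:
  assumes "comm_group G" "D_count G = 1"
  shows "cyclic_group G \<and> (\<exists>p. prime p \<and> order G = p ^ 2)"
proof -
  obtain H0 where H0: "non_self_normalizing G H0"
    using D_count_eq_1_imp_ex[OF assms(2)] by blast
  have "H = H0" if H: "subgroup H G" "H \<noteq> {\<one>}" "H \<noteq> carrier G" for H
  proof -
    have "H \<in> subgroup_conj_class G H0"
      using D_count_eq_1_imp_conj[OF assms(2) H0] comm_group_non_self_normalizing_iff[OF assms(1)] H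
      by blast
    moreover have "normalizer G H = carrier G"
      using normalizer_of_normal comm_group.subgroup_imp_normal[OF assms(1) H(1)] by blast
    ultimately show ?thesis
      using conj_class_member_normal_imp_eq H0 subgroup.subset
      unfolding non_self_normalizing_def by blast
  qed
  moreover have "subgroup H0 G" "H0 \<noteq> {\<one>}" "H0 \<noteq> carrier G"
    using H0 comm_group_non_self_normalizing_iff[OF assms(1)] by auto
  ultimately show ?thesis
    using unique_proper_subgroup_imp_cyclic unique_proper_subgroup_imp_prime_square_order by blast
qed

end

section \<open>The nonabelian case\<close>

context finite_group begin

lemma prime_square_D_count_eq_1_imp_comm:
  assumes "order G = p ^ 2" "prime p" "D_count G = 1"
  shows "comm_group G"
proof -
  have "p < p ^ 2"
    using prime_gt_1_nat[OF assms(2)] by (simp add: power2_eq_square)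
  have nsn: "non_self_normalizing G H" if H: "subgroup H G" "card H = p" for H
  proof (rule proper_subgroup_of_p_subgroup_non_self_normalizing[OF subgroup_self _ assms(2) H(1)])
    show "card (carrier G) = p ^ 2"
      using assms(1) unfolding order_def .
    show "H \<subset> carrier G"
      using subgroup.subset[OF H(1)] H(2) \<open>p < p ^ 2\<close> assms(1) unfolding order_def by auto
    show "H \<noteq> {\<one>}"
      using subgroup_prime_card_nontrivial[OF H(1)] H(2) assms(2) by simp
  qed
  obtain H0 where H0: "subgroup H0 G" "card H0 = p"
    using exists_subgroup_prime_power_card[OF assms(2), of 1] assms(1) by auto
  have "H = H0" if H: "subgroup H G" "H \<noteq> {\<one>}" "H \<noteq> carrier G" for H
  proof -
    have "card H = p"
      using card_subgroup_order_prime_square[OF assms(1,2) H(1)] H(2,3) by blast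
    then have "H \<in> subgroup_conj_class G H0" "normalizer G H = carrier G"
      using D_count_eq_1_imp_conj[OF assms(3) nsn[OF H0]] nsn[OF H(1)]
        prime_square_non_self_normalizing_normal[OF assms(1,2)] by blast+
    then show ?thesis
      using conj_class_member_normal_imp_eq[OF subgroup.subset[OF H0(1)]] by blast
  qed
  then have "cyclic_group G"
    using unique_proper_subgroup_imp_cyclic[OF H0(1)] nsn[OF H0] non_self_normalizing_imp_proper
    unfolding non_self_normalizing_def by blast
  then show ?thesis
    by (rule cyclic_imp_abelian_group)
qed

lemma D_count_eq_1_card_eq_of_prime_square_dvd:
  assumes "D_count G = 1" "non_self_normalizing G H" "prime p" "p ^ 2 dvd order G"
  shows "card H = p"
proof -
  obtain K where K: "subgroup K G" "card K = p ^ 2"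
    using exists_subgroup_prime_power_card[OF assms(3,4)] by blast
  obtain P where P: "subgroup P G" "P \<subseteq> K" "card P = p"
    using exists_subgroup_prime_power_card_in[OF K(1) assms(3), of 1] K(2) by (auto simp: power2_eq_square)
  have "p < p ^ 2"
    using prime_gt_1_nat[OF assms(3)] by (simp add: power2_eq_square)
  then have "P \<subset> K"
    using P K(2) by auto
  moreover have "P \<noteq> {\<one>}"
    using subgroup_prime_card_nontrivial[OF P(1)] P(3) assms(3) by simp
  ultimately have "non_self_normalizing G P"
    using proper_subgroup_of_p_subgroup_non_self_normalizing[OF K assms(3) P(1)] by blast
  then show ?thesis
    using D_count_eq_1_imp_card_eq[OF assms(1,2)] P(3) by simp
qed

lemma D_count_eq_1_not_prime_cube_dvd:
  assumes "D_count G = 1" "prime p"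
  shows "\<not> p ^ 3 dvd order G"
proof
  assume cube: "p ^ 3 dvd order G"
  obtain L where L: "subgroup L G" "card L = p ^ 3"
    using exists_subgroup_prime_power_card[OF assms(2) cube] by blast
  obtain K where K: "subgroup K G" "K \<subseteq> L" "card K = p ^ 2"
    using exists_subgroup_prime_power_card_in[OF L(1) assms(2), of 2] L(2) by (auto simp: le_imp_power_dvd)
  have "1 < p" "p < p ^ 2" "p ^ 2 < p ^ 3"
    using prime_gt_1_nat[OF assms(2)] by (auto simp: power2_eq_square power3_eq_cube)
  then have "K \<subset> L" "K \<noteq> {\<one>}"
    using K L(2) by auto
  then have "non_self_normalizing G K"
    using proper_subgroup_of_p_subgroup_non_self_normalizing[OF L assms(2) K(1)] by blast
  moreover have "p ^ 2 dvd order G"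
    using cube by (rule dvd_trans[rotated]) (simp add: le_imp_power_dvd)
  ultimately have "card K = p"
    using D_count_eq_1_card_eq_of_prime_square_dvd[OF assms(1) _ assms(2)] by blast
  then show False
    using K(3) \<open>p < p ^ 2\<close> by simp
qed

lemma D_count_eq_1_noncomm_order_shape:
  assumes "D_count G = 1" "\<not> comm_group G" "non_self_normalizing G H0"
  shows "prime (card H0) \<and>
    (\<exists>s. prime s \<and> s \<noteq> card H0 \<and> (order G = card H0 * s \<or> order G = card H0 ^ 2 * s))"
proof -
  define m where "m = card H0"
  have "order G \<noteq> 1" "\<not> prime (order G)"
    using assms(2) prime_order_imp_cyclic cyclic_imp_abelian_group trivial_imp_cyclic_group
      subgroup_card_eq_1_iff[OF subgroup_self] unfolding order_def trivial_group_def by auto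
  moreover have "order G > 0"
    using finite_carrier order_gt_0_iff_finite by blast
  ultimately have "order G > 1"
    by linarith
  have shape: "prime m \<and> (order G = m ^ 2 \<or>
      (\<exists>s. prime s \<and> s \<noteq> m \<and> (order G = m * s \<or> order G = m ^ 2 * s)))"
  proof (rule prime_factorization_shape[OF \<open>order G > 1\<close> \<open>\<not> prime (order G)\<close>])
    show "p = m" if "prime p" "p ^ 2 dvd order G" for p
      using D_count_eq_1_card_eq_of_prime_square_dvd[OF assms(1,3) that] unfolding m_def by simp
    show "\<not> p ^ 3 dvd order G" if "prime p" for p
      using D_count_eq_1_not_prime_cube_dvd[OF assms(1) that] .
    show "p = q"
      if pq: "prime p" "prime q" "p dvd order G" "q dvd order G" "p \<noteq> m" "q \<noteq> m" for p q
    proof -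
      obtain P Q where P: "subgroup P G" "card P = p" and Q: "subgroup Q G" "card Q = q"
        using exists_subgroup_prime_power_card[of p 1] exists_subgroup_prime_power_card[of q 1] pq(1-4)
        by auto
      then show ?thesis
        using self_normalizing_prime_subgroups_card_eq[OF P(1) _ _ Q(1)]
          D_count_eq_1_self_normalizing[OF assms(1,3)] pq unfolding m_def by simp
    qed
  qed
  moreover have "order G \<noteq> m ^ 2"
    using prime_square_D_count_eq_1_imp_comm[OF _ _ assms(1)] assms(2) shape by blast
  ultimately show ?thesis
    unfolding m_def by blast
qed

lemma order_square_times_prime_non_self_normalizing:
  assumes "order G = m ^ 2 * s" "prime m" "prime s" "m \<noteq> s"
    and "subgroup S G" "card S = s" "normalizer G S = S"
  shows "\<exists>K. non_self_normalizing G K \<and> card K = m ^ 2"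
proof -
  obtain K where K: "subgroup K G" "card K = m ^ 2"
    using exists_subgroup_prime_power_card[OF assms(2), of 2] assms(1) by auto
  have "\<not> s dvd m ^ 2"
    using assms(2-4) primes_dvd_imp_eq prime_dvd_power_nat by metis
  then have NK: "normalizer G K = carrier G"
    using complement_of_self_normalizing_prime_subgroup_normal[OF assms(5) _ assms(7) K(1)] K(2) assms(1,3,6)
    by simp
  have "1 < m ^ 2" "m ^ 2 < m ^ 2 * s"
    using less_1_mult[of m m] prime_gt_1_nat[OF assms(2)] prime_gt_1_nat[OF assms(3)]
    by (simp_all add: power2_eq_square)
  then have "K \<noteq> {\<one>}" "K \<noteq> carrier G"
    using K(2) assms(1) unfolding order_def by auto
  then show ?thesis
    using K NK unfolding non_self_normalizing_def by auto
qed

lemma D_count_eq_1_noncomm_imp_frobenius_pq: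
  assumes "D_count G = 1" "\<not> comm_group G"
  shows "frobenius_group G \<and> (\<exists>p q. prime p \<and> prime q \<and> order G = p * q)"
proof -
  obtain H0 where H0: "non_self_normalizing G H0"
    using D_count_eq_1_imp_ex[OF assms(1)] by blast
  define m where "m = card H0"
  obtain s where m: "prime m" "prime s" "s \<noteq> m"
    and shape: "order G = m * s \<or> order G = m ^ 2 * s"
    using D_count_eq_1_noncomm_order_shape[OF assms H0] unfolding m_def by blast
  obtain S where S: "subgroup S G" "card S = s"
    using exists_subgroup_prime_power_card[OF m(2), of 1] shape by auto
  have NS: "normalizer G S = S"
    using D_count_eq_1_self_normalizing[OF assms(1) H0 S(1)] S(2) m unfolding m_def by simp
  have "m < m ^ 2"
    using prime_gt_1_nat[OF m(1)] by (simp add: power2_eq_square)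
  then have "order G \<noteq> m ^ 2 * s"
    using order_square_times_prime_non_self_normalizing[OF _ m(1,2) _ S NS] m(3)
      D_count_eq_1_imp_card_eq[OF assms(1) H0] unfolding m_def by fastforce
  then have order: "order G = m * s"
    using shape by blast
  have "S \<noteq> carrier G"
    using S(2) order prime_gt_1_nat[OF m(1)] prime_gt_0_nat[OF m(2)] unfolding order_def by auto
  then show ?thesis
    using self_normalizing_prime_subgroup_imp_frobenius[OF S(1) _ NS] S(2) m order by auto
qed

lemma order_pq_non_self_normalizing_eq:
  assumes "order G = r * s" "prime r" "prime s" "r \<noteq> s"
    and "subgroup H G" "card H = r" "normalizer G H = H"
    and "subgroup Y G" "card Y = s" "non_self_normalizing G Z"
  shows "Z = Y"
proof -
  have Z: "subgroup Z G" "Z \<noteq> {\<one>}" "Z \<noteq> carrier G" "normalizer G Z \<noteq> Z"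
    using assms(10) non_self_normalizing_imp_proper unfolding non_self_normalizing_def by auto
  have "\<not> r dvd s"
    using assms(2-4) primes_dvd_imp_eq by blast
  then have Y_elements: "Y - {\<one>} = carrier G - {\<one>} - \<Union>(subgroup_conj_class G H)"
    using complement_nontrivial_elements[OF assms(5) _ assms(7,8)] assms(1,2,6,9)
    by (simp add: mult.commute)
  have H_conj: "subgroup c G \<and> card c = r" if "c \<in> subgroup_conj_class G H" for c
    using subgroup_conj_class_memD[OF that assms(5)] assms(6) by simp
  have Z_elements: "Z - {\<one>} \<subseteq> carrier G - {\<one>}"
    using subgroup.subset[OF Z(1)] by blast
  consider "card Z = r" | "card Z = s"
    using card_proper_subgroup_order_pq[OF assms(1-3) Z(1-3)] by blast
  then show ?thesis
  proof cases
    case 1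
    \<comment> \<open>Then \<open>Z\<close> is normal, so it avoids \<open>Y\<close> and all conjugates of \<open>H\<close>, which together exhaust \<open>G\<close>.\<close>
    have "H \<noteq> carrier G"
      using assms(1,6) prime_gt_1_nat[OF assms(2)] prime_gt_1_nat[OF assms(3)] unfolding order_def by auto
    moreover have "normalizer G Z = carrier G"
      using normalizer_of_prime_subgroup_order_pq[of s r Z] assms(1-4) Z(1,4) 1 by (simp add: mult.commute)
    ultimately have "Z \<inter> c = {\<one>}" if "c \<in> subgroup_conj_class G H" for c
      using normal_subgroup_Int_conjugate[OF assms(5) _ assms(7) _ Z(1) _ _ that] 1 assms(2,6) by simp
    moreover have "Z \<inter> Y = {\<one>}"
      using prime_card_subgroups_Int[OF Z(1) assms(8)] 1 assms(2-4,9) by auto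
    ultimately have "Z - {\<one>} = {}"
      using Z_elements Y_elements by blast
    then show ?thesis
      using Z(2) subgroup.one_closed[OF Z(1)] by blast
  next
    case 2
    have "(\<Union>{Z} - {\<one>}) \<inter> (\<Union>(subgroup_conj_class G H) - {\<one>}) = {}"
      using Union_prime_subgroups_disjoint[of "{Z}" s "subgroup_conj_class G H" r] Z(1) 2 H_conj assms(2-4)
      by auto
    then have "Z - {\<one>} \<subseteq> Y - {\<one>}"
      using Z_elements Y_elements by auto
    then have "Z \<subseteq> Y"
      using subgroup.one_closed[OF assms(8)] by blast
    then show ?thesis
      using card_subset_eq[OF finite_subgroup[OF assms(8)]] 2 assms(9) by simp
  qed
qed

lemma order_pq_self_normalizing_imp_D_count_eq_1:
  assumes "order G = r * s" "prime r" "prime s" "r \<noteq> s"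
    and "subgroup H G" "card H = r" "normalizer G H = H"
  shows "D_count G = 1"
proof -
  obtain Y where Y: "subgroup Y G" "card Y = s"
    using exists_subgroup_prime_power_card[OF assms(3), of 1] assms(1) by auto
  have "\<not> r dvd s"
    using assms(2-4) primes_dvd_imp_eq by blast
  then have "normalizer G Y = carrier G"
    using complement_of_self_normalizing_prime_subgroup_normal[OF assms(5) _ assms(7) Y(1)] Y(2) assms(1,2,6)
    by (simp add: mult.commute)
  moreover have "Y \<noteq> carrier G" "Y \<noteq> {\<one>}"
    using Y(2) assms(1,3) prime_gt_1_nat[OF assms(2)] subgroup_prime_card_nontrivial[OF Y(1)]
    unfolding order_def by auto
  ultimately have "non_self_normalizing G Y"
    using Y(1) unfolding non_self_normalizing_def by auto
  then show ?thesis
    using D_count_eq_1I order_pq_non_self_normalizing_eq[OF assms Y] by metis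
qed

lemma frobenius_pq_imp_D_count_eq_1:
  assumes "frobenius_group G" "prime p" "prime q" "order G = p * q"
  shows "D_count G = 1"
proof -
  obtain H where H: "subgroup H G" "H \<noteq> {\<one>}" "H \<noteq> carrier G"
    and complement: "\<forall>g \<in> carrier G - H. H \<inter> (g <# H #> inv g) = {\<one>}"
    using assms(1) unfolding frobenius_group_def by blast
  have NH: "normalizer G H = H"
    using frobenius_complement_self_normalizing[OF H(1,2) complement] .
  have card_H: "card H = p \<or> card H = q"
    using card_proper_subgroup_order_pq[OF assms(4,2,3) H] .
  show ?thesis
  proof (cases "p = q")
    case True
    then have "card (carrier G) = p ^ 2" "H \<subset> carrier G"
      using assms(4) H(3) subgroup.subset[OF H(1)] unfolding order_def by (auto simp: power2_eq_square)
    then show ?thesis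
      using p_subgroup_normalizer_grows[OF subgroup_self _ assms(2) H(1)] NH by auto
  next
    case False
    then show ?thesis
      using card_H order_pq_self_normalizing_imp_D_count_eq_1[OF _ _ _ _ H(1) _ NH] assms(2-4)
      by (metis mult.commute)
  qed
qed

end

theorem mainTheorem4:
  fixes G :: "('a, 'b) monoid_scheme"
  assumes "group G" and "finite (carrier G)"
  shows "(comm_group G \<longrightarrow>
            (D_count G = 1 \<longleftrightarrow> cyclic_group G \<and> (\<exists>p::nat. Factorial_Ring.prime p \<and> order G = p ^ 2)))
       \<and> (\<not> comm_group G \<longrightarrow>
            (D_count G = 1 \<longleftrightarrow> frobenius_group G \<and>
               (\<exists>p q::nat. Factorial_Ring.prime p \<and> Factorial_Ring.prime q \<and> order G = p * q)))"
proof -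
  interpret finite_group G
    using assms by (simp add: finite_group_def finite_group_axioms_def)
  have "D_count G = 1 \<longleftrightarrow> cyclic_group G \<and> (\<exists>p. prime p \<and> order G = p ^ 2)"
    if "comm_group G"
    using comm_D_count_eq_1_imp_cyclic_prime_square[OF that] cyclic_prime_square_D_count_eq_1 by blast
  moreover have "D_count G = 1 \<longleftrightarrow> frobenius_group G \<and> (\<exists>p q. prime p \<and> prime q \<and> order G = p * q)"
    if "\<not> comm_group G"
    using D_count_eq_1_noncomm_imp_frobenius_pq[OF _ that] frobenius_pq_imp_D_count_eq_1 by blast
  ultimately show ?thesis
    by blast
qed

end
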